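(* Let $H$ be obtained from $F_4$ by adding a new vertex $v$ and joining it to three distinct vertices of $F_4$; let $S$ be the set of these three neighbours. If $H$ does not contain $K_{3,4}$ as a minor, then either $S$ contains two vertices adjacent in $F_4$, or $S=\{f^1_1,f^1_4,f^2\}$, or $S=\{f^2_1,f^2_4,f^1\}$. Moreover, if $S=\{f^1_1,f^1_4,f^2\}$ or $S=\{f^2_1,f^2_4,f^1\}$, then $H$ contains $\mathfrak{Q}^+$ as a minor.
   Context: $F_4$ is the graph with vertex set $\{f^1,f^2\}\cup\{f^i_j: i\in\{1,2\}, j\in\{1,2,3,4\}\}$ and the 16 edges: for each $i\in\{1,2\}$, $f^if^i_1$, $f^if^i_2$, $f^if^i_4$, $f^i_3f^i_1$, $f^i_3f^i_2$, $f^i_3f^i_4$; and $f^1_jf^2_{5-j}$ for $j=1,2,3,4$. $\mathfrak{Q}^+$ is the graph obtained from the cube $Q_3$ by adding a new vertex adjacent to three pairwise non-adjacent vertices of the cube. *)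

theory Defs
  imports Main
begin

definition simple_graph :: "'a set \<Rightarrow> ('a \<Rightarrow> 'a \<Rightarrow> bool) \<Rightarrow> bool" where
  "simple_graph V E \<longleftrightarrow> finite V \<and> (\<forall>x y. E x y \<longrightarrow> x \<in> V \<and> y \<in> V \<and> x \<noteq> y \<and> E y x)"

definition connected_in :: "('a \<Rightarrow> 'a \<Rightarrow> bool) \<Rightarrow> 'a set \<Rightarrow> bool" where
  "connected_in E X \<longleftrightarrow> X \<noteq> {} \<and>
     (\<forall>x\<in>X. \<forall>y\<in>X. (\<lambda>a b. a \<in> X \<and> b \<in> X \<and> E a b)\<^sup>*\<^sup>* x y)"

definition has_minor :: "'a set \<Rightarrow> ('a \<Rightarrow> 'a \<Rightarrow> bool) \<Rightarrow> 'b set \<Rightarrow> ('b \<Rightarrow> 'b \<Rightarrow> bool) \<Rightarrow> bool" where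
  "has_minor VG EG VH EH \<longleftrightarrow> (\<exists>\<phi> :: 'b \<Rightarrow> 'a set.
     (\<forall>x\<in>VH. \<phi> x \<subseteq> VG \<and> connected_in EG (\<phi> x)) \<and>
     (\<forall>x\<in>VH. \<forall>y\<in>VH. x \<noteq> y \<longrightarrow> \<phi> x \<inter> \<phi> y = {}) \<and>
     (\<forall>x\<in>VH. \<forall>y\<in>VH. EH x y \<longrightarrow> (\<exists>a\<in>\<phi> x. \<exists>b\<in>\<phi> y. EG a b)))"

text \<open>Top i stands for f^i, Sub i j for f^i_j.\<close>
datatype f4v = Top nat | Sub nat nat

definition F4_V :: "f4v set" where
  "F4_V = {Top 1, Top 2} \<union> {Sub i j | i j. i \<in> {1,2} \<and> j \<in> {1,2,3,4}}"

definition F4_edges :: "(f4v \<times> f4v) set" where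
  "F4_edges = (\<Union>i\<in>{1,2}. {(Top i, Sub i 1), (Top i, Sub i 2), (Top i, Sub i 4),
                            (Sub i 3, Sub i 1), (Sub i 3, Sub i 2), (Sub i 3, Sub i 4)})
              \<union> {(Sub 1 j, Sub 2 (5 - j)) | j. j \<in> {1,2,3,4}}"

definition F4_E :: "f4v \<Rightarrow> f4v \<Rightarrow> bool" where
  "F4_E x y \<longleftrightarrow> (x, y) \<in> F4_edges \<or> (y, x) \<in> F4_edges"

text \<open>H: F_4 plus a new vertex None adjacent to the vertices in S.\<close>
definition H_V :: "f4v option set" where
  "H_V = insert None (Some ` F4_V)"

definition H_E :: "f4v set \<Rightarrow> f4v option \<Rightarrow> f4v option \<Rightarrow> bool" where
  "H_E S x y \<longleftrightarrow>
     (case (x, y) of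
        (Some a, Some b) \<Rightarrow> F4_E a b
      | (None, Some b) \<Rightarrow> b \<in> S
      | (Some a, None) \<Rightarrow> a \<in> S
      | (None, None) \<Rightarrow> False)"

definition K34_V :: "(nat + nat) set" where
  "K34_V = Inl ` {..<3} \<union> Inr ` {..<4}"

definition K34_E :: "(nat + nat) \<Rightarrow> (nat + nat) \<Rightarrow> bool" where
  "K34_E x y \<longleftrightarrow> (\<exists>i j. (x = Inl i \<and> y = Inr j) \<or> (x = Inr j \<and> y = Inl i))"

text \<open>Cube vertices 0..7 (binary encodings), adjacent iff they differ in one bit.
  Vertex 8 is adjacent to 3 (011), 5 (101), 6 (110), which are pairwise non-adjacent;
  all such triples are equivalent under cube automorphisms.\<close>
definition Qp_V :: "nat set" where
  "Qp_V = {0..8}"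

definition Qp_edges :: "(nat \<times> nat) set" where
  "Qp_edges = {(0,1),(0,2),(0,4),(1,3),(1,5),(2,3),(2,6),(3,7),(4,5),(4,6),(5,7),(6,7),
               (8,3),(8,5),(8,6)}"

definition Qp_E :: "nat \<Rightarrow> nat \<Rightarrow> bool" where
  "Qp_E x y \<longleftrightarrow> (x, y) \<in> Qp_edges \<or> (y, x) \<in> Qp_edges"

end

theory Submission
  imports Defs
begin

text \<open>
  A set of three pairwise non-adjacent vertices of \<open>F\<^sub>4\<close> is one of only 28 sets.
  For 26 of them we exhibit explicit branch sets of a \<open>K\<^sub>3\<^sub>,\<^sub>4\<close> model in \<open>H\<close>; typically
  \<open>F\<^sub>4\<close> carries a \<open>K\<^sub>3\<^sub>,\<^sub>3\<close> model whose three branch sets on one side are met by \<open>S\<close>,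
  and the new vertex \<open>v\<close> becomes the fourth vertex on the other side.
  For the two remaining sets we exhibit a model of \<open>\<Q>\<^sup>+\<close> instead.
  Each model is a certificate checked by simplification.
\<close>

lemma connected_in_singleton [simp]: "connected_in E {a}"
  unfolding connected_in_def by auto

lemma connected_in_insert:
  assumes "symp E" and X: "connected_in E X" and "\<exists>a\<in>X. E b a"
  shows "connected_in E (insert b X)"
proof -
  obtain a where "a \<in> X" "E b a"
    using assms(3) by blast
  define R where "R = (\<lambda>u v. u \<in> insert b X \<and> v \<in> insert b X \<and> E u v)"
  have "(\<lambda>u v. u \<in> X \<and> v \<in> X \<and> E u v) \<le> R"
    unfolding R_def by auto
  then have X_paths: "R\<^sup>*\<^sup>* x y" if "x \<in> X" "y \<in> X" for x y
    using X that unfolding connected_in_def by (meson rtranclp_mono predicate2D)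
  have "R\<^sup>*\<^sup>* b a" "R\<^sup>*\<^sup>* a b"
    using \<open>symp E\<close> \<open>a \<in> X\<close> \<open>E b a\<close> unfolding R_def by (auto dest: sympD)
  then have "R\<^sup>*\<^sup>* b x" "R\<^sup>*\<^sup>* x b" if "x \<in> X" for x
    using X_paths[OF \<open>a \<in> X\<close> that] X_paths[OF that \<open>a \<in> X\<close>]
    by (auto intro: rtranclp_trans)
  then have "R\<^sup>*\<^sup>* x y" if "x \<in> insert b X" "y \<in> insert b X" for x y
    using that X_paths by auto
  then show ?thesis
    unfolding connected_in_def R_def[symmetric] by blast
qed

lemma disjoint_nth_if_distinct_concat:
  assumes "distinct (concat xss)" "i < length xss" "j < length xss" "i \<noteq> j"
  shows "set (xss ! i) \<inter> set (xss ! j) = {}"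
proof -
  have *: "set (xss ! i) \<inter> set (xss ! j) = {}" if "i < j" "j < length xss" for i j
  proof -
    have "distinct (concat (take j xss) @ concat (drop j xss))"
      using assms by (simp flip: concat_append)
    moreover have "set (xss ! i) \<subseteq> set (concat (take j xss))"
      using that by (auto simp: in_set_conv_nth intro!: exI[of _ i])
    moreover have "set (xss ! j) \<subseteq> set (concat (drop j xss))"
      using that by (subst Cons_nth_drop_Suc[symmetric]) auto
    ultimately show ?thesis by auto
  qed
  show ?thesis
    using assms *[of i j] *[of j i] by (cases "i < j") auto
qed

definition branch_lists :: "'a set \<Rightarrow> ('a \<Rightarrow> 'a \<Rightarrow> bool) \<Rightarrow> 'a list list \<Rightarrow> bool" where
  "branch_lists V E Bs \<longleftrightarrow> distinct (concat Bs) \<and> (\<forall>B\<in>set Bs. set B \<subseteq> V \<and> connected_in E (set B))"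

lemma has_minor_if_branch_lists:
  fixes idx :: "'b \<Rightarrow> nat"
  assumes Bs: "branch_lists VG EG Bs" and "inj_on idx VH" and "\<forall>x\<in>VH. idx x < length Bs"
    and "\<forall>x\<in>VH. \<forall>y\<in>VH. EH x y \<longrightarrow> (\<exists>a\<in>set (Bs ! idx x). \<exists>b\<in>set (Bs ! idx y). EG a b)"
  shows "has_minor VG EG VH EH"
proof -
  have "set (Bs ! idx x) \<subseteq> VG \<and> connected_in EG (set (Bs ! idx x))" if "x \<in> VH" for x
    using Bs assms(3) that unfolding branch_lists_def by auto
  moreover have "set (Bs ! idx x) \<inter> set (Bs ! idx y) = {}" if "x \<in> VH" "y \<in> VH" "x \<noteq> y" for x y
    using Bs assms(3) that inj_on_eq_iff[OF assms(2)] unfolding branch_lists_def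
    by (intro disjoint_nth_if_distinct_concat) auto
  ultimately show ?thesis
    unfolding has_minor_def using assms(4) by (intro exI[of _ "\<lambda>x. set (Bs ! idx x)"]) blast
qed

definition K34_model :: "'a set \<Rightarrow> ('a \<Rightarrow> 'a \<Rightarrow> bool) \<Rightarrow> 'a list list \<Rightarrow> bool" where
  "K34_model V E Bs \<longleftrightarrow> length Bs = 7 \<and> branch_lists V E Bs \<and>
     (\<forall>P\<in>set (take 3 Bs). \<forall>Q\<in>set (drop 3 Bs). \<exists>a\<in>set P. \<exists>b\<in>set Q. E a b)"

lemma has_K34_minor_if_model:
  assumes "symp E" and "K34_model V E Bs"
  shows "has_minor V E K34_V K34_E"
proof (rule has_minor_if_branch_lists[where idx = "case_sum id ((+) 3)"])
  have "length Bs = 7"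
    using assms(2) unfolding K34_model_def by simp
  have adj: "\<exists>a\<in>set (Bs ! i). \<exists>b\<in>set (Bs ! (3 + j)). E a b" if "i < 3" "j < 4" for i j
  proof -
    have "Bs ! i \<in> set (take 3 Bs)" "Bs ! (3 + j) \<in> set (drop 3 Bs)"
      using nth_mem[of i "take 3 Bs"] nth_mem[of j "drop 3 Bs"] that \<open>length Bs = 7\<close> by simp_all
    then show ?thesis
      using assms(2) unfolding K34_model_def by blast
  qed
  moreover have "\<exists>a\<in>set (Bs ! (3 + j)). \<exists>b\<in>set (Bs ! i). E a b" if "i < 3" "j < 4" for i j
    using adj[OF that] \<open>symp E\<close> by (meson sympD)
  ultimately show "\<forall>x\<in>K34_V. \<forall>y\<in>K34_V. K34_E x y \<longrightarrow>
      (\<exists>a\<in>set (Bs ! case_sum id ((+) 3) x). \<exists>b\<in>set (Bs ! case_sum id ((+) 3) y). E a b)"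
    unfolding K34_V_def K34_E_def by auto
qed (use assms(2) in \<open>auto simp: K34_model_def K34_V_def inj_on_def\<close>)

definition Qp_model :: "'a set \<Rightarrow> ('a \<Rightarrow> 'a \<Rightarrow> bool) \<Rightarrow> 'a list list \<Rightarrow> bool" where
  "Qp_model V E Bs \<longleftrightarrow> length Bs = 9 \<and> branch_lists V E Bs \<and>
     (\<forall>(i, j)\<in>Qp_edges. \<exists>a\<in>set (Bs ! i). \<exists>b\<in>set (Bs ! j). E a b)"

lemma has_Qp_minor_if_model:
  assumes "symp E" and "Qp_model V E Bs"
  shows "has_minor V E Qp_V Qp_E"
proof (rule has_minor_if_branch_lists[where idx = id])
  show "\<forall>x\<in>Qp_V. \<forall>y\<in>Qp_V. Qp_E x y \<longrightarrow>
      (\<exists>a\<in>set (Bs ! id x). \<exists>b\<in>set (Bs ! id y). E a b)"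
    using assms unfolding Qp_model_def Qp_E_def by (fastforce dest: sympD)
qed (use assms(2) in \<open>auto simp: Qp_model_def Qp_V_def\<close>)

lemma card_3_obtain_sorted:
  fixes f :: "'a \<Rightarrow> 'b::linorder"
  assumes "card S = 3" and "inj_on f S"
  obtains a b c where "S = {a, b, c}" and "f a < f b" and "f b < f c"
proof -
  obtain x y z where S: "S = {x, y, z}" and "x \<noteq> y" "y \<noteq> z" "x \<noteq> z"
    using assms(1)[unfolded card_3_iff] by blast
  then have "f x \<noteq> f y" "f y \<noteq> f z" "f x \<noteq> f z"
    using assms(2) unfolding S inj_on_def by blast+
  moreover have "S = {x, z, y}" "S = {y, x, z}" "S = {y, z, x}" "S = {z, x, y}" "S = {z, y, x}"
    unfolding S by auto
  ultimately show thesis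
    using that[of x y z] that[of x z y] that[of y x z] that[of y z x] that[of z x y] that[of z y x] S
    by (meson linorder_neqE order.strict_trans)
qed

lemma F4_V_eq:
  "F4_V = {Top 1, Top 2, Sub 1 1, Sub 1 2, Sub 1 3, Sub 1 4, Sub 2 1, Sub 2 2, Sub 2 3, Sub 2 4}"
  unfolding F4_V_def by auto

lemma F4_edges_eq:
  "F4_edges = {(Top 1, Sub 1 1), (Top 1, Sub 1 2), (Top 1, Sub 1 4),
     (Sub 1 3, Sub 1 1), (Sub 1 3, Sub 1 2), (Sub 1 3, Sub 1 4),
     (Top 2, Sub 2 1), (Top 2, Sub 2 2), (Top 2, Sub 2 4),
     (Sub 2 3, Sub 2 1), (Sub 2 3, Sub 2 2), (Sub 2 3, Sub 2 4),
     (Sub 1 1, Sub 2 4), (Sub 1 2, Sub 2 3), (Sub 1 3, Sub 2 2), (Sub 1 4, Sub 2 1)}"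
proof -
  have "{(Sub 1 j, Sub 2 (5 - j)) | j. j \<in> {1, 2, 3, 4 :: nat}} =
      {(Sub 1 1, Sub 2 4), (Sub 1 2, Sub 2 3), (Sub 1 3, Sub 2 2), (Sub 1 4, Sub 2 1)}"
    by auto
  then show ?thesis
    unfolding F4_edges_def by auto
qed

lemma symp_H_E [simp]: "symp (H_E S)"
  by (rule sympI) (auto simp: H_E_def F4_E_def split: option.splits)

lemma H_E_simps [simp]:
  "H_E S (Some a) (Some b) \<longleftrightarrow> F4_E a b"
  "H_E S None (Some b) \<longleftrightarrow> b \<in> S"
  "H_E S (Some a) None \<longleftrightarrow> a \<in> S"
  "\<not> H_E S None None"
  by (simp_all add: H_E_def)

(* Any injective ranking will do: it lets each 3-set of vertices be enumerated once,
   in increasing order. *)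
definition F4_rank :: "f4v \<Rightarrow> nat" where
  "F4_rank v = (case v of Top i \<Rightarrow> i | Sub i j \<Rightarrow> 4 * i + j)"

lemma inj_on_F4_rank: "inj_on F4_rank F4_V"
  by (simp add: F4_V_eq F4_rank_def)

(* Each triple is written in increasing F4_rank order, so that the enumeration in
   F4_sorted_independent_triples meets it syntactically. *)
definition K34_model_table :: "(f4v set \<times> f4v option list list) list" where
  "K34_model_table = [
    ({Top 1, Top 2, Sub 1 3},
     [[Some (Top 1)], [Some (Sub 2 3), Some (Sub 2 4), Some (Top 2)], [Some (Sub 1 3)],
      [Some (Sub 1 1)], [Some (Sub 1 2)], [Some (Sub 2 1), Some (Sub 1 4)], [None]]),
    ({Top 1, Top 2, Sub 2 3},
     [[Some (Sub 1 1), Some (Top 1)], [Some (Top 2)], [Some (Sub 2 3)],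
      [Some (Sub 2 1), Some (Sub 1 4)], [Some (Sub 1 3), Some (Sub 2 2)], [Some (Sub 2 4)], [None]]),
    ({Top 1, Sub 1 3, Sub 2 1},
     [[Some (Top 1)], [Some (Sub 1 3)], [Some (Sub 2 1), Some (Sub 2 3)],
      [Some (Sub 2 4), Some (Sub 1 1)], [Some (Sub 1 2)], [Some (Sub 1 4)], [None]]),
    ({Top 1, Sub 1 3, Sub 2 3},
     [[Some (Top 1)], [Some (Sub 1 3)], [Some (Sub 2 3)],
      [Some (Sub 2 4), Some (Sub 1 1)], [Some (Sub 1 2)], [Some (Sub 2 1), Some (Sub 1 4)], [None]]),
    ({Top 1, Sub 1 3, Sub 2 4},
     [[Some (Top 1)], [Some (Sub 1 3)], [Some (Sub 2 4), Some (Sub 2 3)],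
      [Some (Sub 1 1)], [Some (Sub 1 2)], [Some (Sub 2 1), Some (Sub 1 4)], [None]]),
    ({Top 1, Sub 2 1, Sub 2 2},
     [[None, Some (Top 1)], [Some (Sub 1 3)], [Some (Sub 2 3)],
      [Some (Sub 2 4), Some (Sub 1 1)], [Some (Sub 1 2)], [Some (Sub 2 1), Some (Sub 1 4)], [Some (Sub 2 2)]]),
    ({Top 1, Sub 2 2, Sub 2 4},
     [[Some (Top 1)], [Some (Sub 1 3), Some (Sub 2 2)], [Some (Sub 2 4), Some (Sub 2 3)],
      [Some (Sub 1 1)], [Some (Sub 1 2)], [Some (Sub 2 1), Some (Sub 1 4)], [None]]),
    ({Top 2, Sub 1 1, Sub 1 2},
     [[None, Some (Top 2)], [Some (Sub 1 3)], [Some (Sub 2 3)],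
      [Some (Sub 2 4), Some (Sub 1 1)], [Some (Sub 1 2)], [Some (Sub 2 1), Some (Sub 1 4)], [Some (Sub 2 2)]]),
    ({Top 2, Sub 1 1, Sub 2 3},
     [[Some (Top 2)], [Some (Sub 1 3), Some (Sub 1 1)], [Some (Sub 2 3)],
      [Some (Sub 2 1), Some (Sub 1 4)], [Some (Sub 2 2)], [Some (Sub 2 4)], [None]]),
    ({Top 2, Sub 1 2, Sub 1 4},
     [[None, Some (Top 2)], [Some (Sub 1 3)], [Some (Sub 2 3)],
      [Some (Sub 2 4), Some (Sub 1 1)], [Some (Sub 1 2)], [Some (Sub 2 1), Some (Sub 1 4)], [Some (Sub 2 2)]]),
    ({Top 2, Sub 1 3, Sub 2 3},
     [[Some (Top 2)], [Some (Sub 1 3)], [Some (Sub 2 3)],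
      [Some (Sub 2 4), Some (Sub 1 1)], [Some (Sub 2 1), Some (Sub 1 4)], [Some (Sub 2 2)], [None]]),
    ({Top 2, Sub 1 4, Sub 2 3},
     [[Some (Top 2)], [Some (Sub 1 3), Some (Sub 1 4)], [Some (Sub 2 3)],
      [Some (Sub 2 4), Some (Sub 1 1)], [Some (Sub 2 1)], [Some (Sub 2 2)], [None]]),
    ({Sub 1 1, Sub 1 2, Sub 1 4},
     [[Some (Sub 2 4), Some (Sub 1 1)], [Some (Sub 1 2)], [Some (Sub 2 1), Some (Sub 1 4)],
      [Some (Top 1)], [Some (Sub 1 3)], [Some (Sub 2 3)], [None]]),
    ({Sub 1 1, Sub 1 2, Sub 2 1},
     [[Some (Sub 2 4), Some (Sub 1 1)], [Some (Sub 1 2)], [Some (Sub 2 1), Some (Sub 1 4)],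
      [Some (Top 1)], [Some (Sub 1 3)], [Some (Sub 2 3)], [None]]),
    ({Sub 1 1, Sub 1 2, Sub 2 2},
     [[Some (Sub 1 1), Some (Top 1)], [Some (Sub 1 2), Some (Sub 2 3)], [Some (Top 2), Some (Sub 2 2)],
      [Some (Sub 1 3)], [Some (Sub 2 1), Some (Sub 1 4)], [Some (Sub 2 4)], [None]]),
    ({Sub 1 1, Sub 1 4, Sub 2 2},
     [[Some (Sub 2 4), Some (Sub 1 1)], [Some (Sub 2 1), Some (Sub 1 4)], [Some (Sub 2 2)],
      [Some (Top 2)], [Some (Sub 1 3)], [Some (Sub 2 3)], [None]]),
    ({Sub 1 1, Sub 1 4, Sub 2 3},
     [[Some (Sub 1 1)], [Some (Sub 1 2), Some (Sub 2 3)], [Some (Sub 2 1), Some (Sub 1 4)],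
      [Some (Top 1)], [Some (Sub 2 4), Some (Top 2)], [Some (Sub 1 3)], [None]]),
    ({Sub 1 1, Sub 2 1, Sub 2 2},
     [[Some (Sub 2 4), Some (Sub 1 1)], [Some (Sub 2 1), Some (Sub 1 4)], [Some (Sub 2 2)],
      [Some (Top 2)], [Some (Sub 1 3)], [Some (Sub 2 3)], [None]]),
    ({Sub 1 2, Sub 1 4, Sub 2 2},
     [[Some (Sub 2 4), Some (Sub 1 2), Some (Sub 1 1), Some (Top 1)], [Some (Sub 2 1), Some (Sub 1 4)], [Some (Sub 2 2)],
      [Some (Top 2)], [Some (Sub 1 3)], [Some (Sub 2 3)], [None]]),
    ({Sub 1 2, Sub 1 4, Sub 2 4},
     [[Some (Sub 2 4), Some (Sub 1 1)], [Some (Sub 1 2)], [Some (Sub 2 1), Some (Sub 1 4)],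
      [Some (Top 1)], [Some (Sub 1 3)], [Some (Sub 2 3)], [None]]),
    ({Sub 1 2, Sub 2 1, Sub 2 2},
     [[Some (Sub 2 4), Some (Sub 1 2), Some (Sub 1 1), Some (Top 1)], [Some (Sub 2 1), Some (Sub 1 4)], [Some (Sub 2 2)],
      [Some (Top 2)], [Some (Sub 1 3)], [Some (Sub 2 3)], [None]]),
    ({Sub 1 2, Sub 2 1, Sub 2 4},
     [[Some (Sub 2 4), Some (Sub 1 1)], [Some (Sub 1 2)], [Some (Sub 2 1), Some (Sub 1 4)],
      [Some (Top 1)], [Some (Sub 1 3)], [Some (Sub 2 3)], [None]]),
    ({Sub 1 2, Sub 2 2, Sub 2 4},
     [[Some (Sub 2 1), Some (Sub 1 4), Some (Top 1)], [Some (Sub 1 3), Some (Sub 2 2)], [Some (Sub 2 4), None],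
      [Some (Top 2)], [Some (Sub 1 1)], [Some (Sub 1 2)], [Some (Sub 2 3)]]),
    ({Sub 1 3, Sub 2 1, Sub 2 4},
     [[Some (Sub 2 1), Some (Sub 1 4)], [Some (Sub 1 3), Some (Sub 2 2)], [Some (Sub 2 4)],
      [Some (Sub 1 1), Some (Top 1)], [Some (Top 2)], [Some (Sub 2 3)], [None]]),
    ({Sub 1 4, Sub 2 2, Sub 2 4},
     [[Some (Sub 2 4), Some (Sub 1 1)], [Some (Sub 2 1), Some (Sub 1 4)], [Some (Sub 2 2)],
      [Some (Top 2)], [Some (Sub 1 3)], [Some (Sub 2 3)], [None]]),
    ({Sub 2 1, Sub 2 2, Sub 2 4},
     [[Some (Sub 2 4), Some (Sub 1 1)], [Some (Sub 2 1), Some (Sub 1 4)], [Some (Sub 2 2)],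
      [Some (Top 2)], [Some (Sub 1 3)], [Some (Sub 2 3)], [None]])]"

lemma K34_model_table_valid: "\<forall>(S, Bs)\<in>set K34_model_table. K34_model H_V (H_E S) Bs"
  by (simp add: K34_model_table_def K34_model_def branch_lists_def H_V_def F4_V_eq F4_E_def F4_edges_eq
      connected_in_insert)

lemma F4_sorted_independent_triples:
  assumes "{a, b, c} \<subseteq> F4_V" and "F4_rank a < F4_rank b" and "F4_rank b < F4_rank c"
    and "\<not> F4_E a b" and "\<not> F4_E a c" and "\<not> F4_E b c"
  shows "{a, b, c} \<in> set (map fst K34_model_table) \<or>
    {a, b, c} = {Top 2, Sub 1 1, Sub 1 4} \<or> {a, b, c} = {Top 1, Sub 2 1, Sub 2 4}"
  using assms unfolding insert_subset F4_V_eq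
  apply (simp only: insert_iff empty_iff simp_thms)
  apply (elim conjE disjE)
  \<comment> \<open>only sorted independent triples survive this step, so the table is unfolded for them alone\<close>
   apply (simp_all add: F4_rank_def F4_E_def F4_edges_eq)
  apply (simp_all add: K34_model_table_def)
  done

lemma H_has_K34_minor:
  assumes "S \<subseteq> F4_V" and "card S = 3" and "\<not> (\<exists>a\<in>S. \<exists>b\<in>S. F4_E a b)"
    and "S \<noteq> {Sub 1 1, Sub 1 4, Top 2}" and "S \<noteq> {Sub 2 1, Sub 2 4, Top 1}"
  shows "has_minor H_V (H_E S) K34_V K34_E"
proof -
  obtain a b c where S: "S = {a, b, c}" and "F4_rank a < F4_rank b" "F4_rank b < F4_rank c"
    using card_3_obtain_sorted[OF assms(2) inj_on_subset[OF inj_on_F4_rank assms(1)]] .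
  then have "S \<in> set (map fst K34_model_table)"
    using F4_sorted_independent_triples[of a b c] assms(1,3-5) by (auto simp: insert_commute)
  then obtain Bs where "(S, Bs) \<in> set K34_model_table"
    by auto
  then have "K34_model H_V (H_E S) Bs"
    using K34_model_table_valid by blast
  then show ?thesis
    by (rule has_K34_minor_if_model[OF symp_H_E])
qed

lemma H_has_Qp_minor:
  "has_minor H_V (H_E {Sub 1 1, Sub 1 4, Top 2}) Qp_V Qp_E"
  "has_minor H_V (H_E {Sub 2 1, Sub 2 4, Top 1}) Qp_V Qp_E"
proof -
  have "Qp_model H_V (H_E {Sub 1 1, Sub 1 4, Top 2})
      [[Some (Top 2)], [Some (Sub 2 1)], [Some (Sub 2 4)], [Some (Sub 1 2), Some (Sub 2 3)], [None],
       [Some (Sub 1 4)], [Some (Sub 1 1)], [Some (Top 1)], [Some (Sub 1 3)]]"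
    "Qp_model H_V (H_E {Sub 2 1, Sub 2 4, Top 1})
      [[Some (Top 1)], [Some (Sub 1 1)], [Some (Sub 1 4)], [Some (Sub 1 3), Some (Sub 2 2)], [None],
       [Some (Sub 2 4)], [Some (Sub 2 1)], [Some (Top 2)], [Some (Sub 2 3)]]"
    by (simp_all add: Qp_model_def Qp_edges_def branch_lists_def H_V_def F4_V_eq F4_E_def F4_edges_eq
        connected_in_insert)
  then show "has_minor H_V (H_E {Sub 1 1, Sub 1 4, Top 2}) Qp_V Qp_E"
    "has_minor H_V (H_E {Sub 2 1, Sub 2 4, Top 1}) Qp_V Qp_E"
    by (simp_all add: has_Qp_minor_if_model)
qed

theorem lemma4p12:
  fixes S :: "f4v set"
  assumes "S \<subseteq> F4_V" and "card S = 3"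
  shows "(\<not> has_minor H_V (H_E S) K34_V K34_E \<longrightarrow>
            (\<exists>a\<in>S. \<exists>b\<in>S. F4_E a b) \<or>
            S = {Sub 1 1, Sub 1 4, Top 2} \<or> S = {Sub 2 1, Sub 2 4, Top 1})
       \<and> ((S = {Sub 1 1, Sub 1 4, Top 2} \<or> S = {Sub 2 1, Sub 2 4, Top 1}) \<longrightarrow>
            has_minor H_V (H_E S) Qp_V Qp_E)"
  using H_has_K34_minor[OF assms] H_has_Qp_minor by blast

end
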